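(* There is an absolute constant $c$ such that the following holds. Let $S$ be a finite set of $n\ge 2$ points in the plane and let $\mathcal{F}$ be the family of axis-parallel rectangles. Then the edges of the Delaunay-graph $D(S,\mathcal{F})$ can be colored with at most $c\log n$ colors (i.e., $O(\log n)$ colors) such that every axis-parallel rectangle that contains at least three points of $S$ contains Delaunay-edges of different colors.
   Context: For a finite point set $S$ and a family of regions $\mathcal{F}$, the Delaunay-edges of $S$ with respect to $\mathcal{F}$ are the $2$-element subsets $\{p,q\}\subseteq S$ for which there is $F\in\mathcal{F}$ with $S\cap F=\{p,q\}$; the Delaunay-graph $D(S,\mathcal{F})$ has vertex set $S$ and the Delaunay-edges as edges. A rectangle contains a Delaunay-edge if it contains both endpoints. Axis-parallel rectangles are sets $[a,b]\times[c,d]$. *)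

theory Defs
  imports Complex_Main
begin

definition rect :: "real \<Rightarrow> real \<Rightarrow> real \<Rightarrow> real \<Rightarrow> (real \<times> real) set" where
  "rect a b c d = {a..b} \<times> {c..d}"

definition axis_rects :: "(real \<times> real) set set" where
  "axis_rects = {rect a b c d | a b c d. True}"

definition delaunay_edges :: "'a set \<Rightarrow> 'a set set \<Rightarrow> 'a set set" where
  "delaunay_edges S F = {e. e \<subseteq> S \<and> card e = 2 \<and> (\<exists>R\<in>F. S \<inter> R = e)}"

end

theory Submission
  imports Defs
begin

text \<open>
  Sort the points by x-coordinate and hang them, in this order, at the leaves of a complete
  binary tree; the level of a pair is the height of the lowest common ancestor of its leaves,
  i.e. the least k with equal x-ranks after division by 2^k.  An edge pq gets colour 2 times
  this level, or, if p and q have the same x-coordinate, 2 times the analogous y-level plus 1.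
  As ranks are below n, only O(log n) colours occur.

  Levels form an ultrametric, so among the pairs of points in a rectangle R attaining the
  maximal level L, one whose bounding box contains the fewest points contains no further point
  and is a Delaunay edge.  A binary tree has no three leaves at pairwise equal positive level, so some
  pair in R has level below L, and levels can only drop when passing to a sub-box of the
  bounding box; again a minimal such pair is a Delaunay edge.
\<close>

definition bbox :: "real \<times> real \<Rightarrow> real \<times> real \<Rightarrow> (real \<times> real) set" where
  "bbox p q = rect (min (fst p) (fst q)) (max (fst p) (fst q)) (min (snd p) (snd q)) (max (snd p) (snd q))"

lemma mem_bbox:
  "r \<in> bbox p q \<longleftrightarrow>
     min (fst p) (fst q) \<le> fst r \<and> fst r \<le> max (fst p) (fst q) \<and>
     min (snd p) (snd q) \<le> snd r \<and> snd r \<le> max (snd p) (snd q)"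
  by (cases r) (auto simp: bbox_def rect_def)

lemma bbox_commute: "bbox p q = bbox q p"
  by (simp add: bbox_def min.commute max.commute)

lemma bbox_ends: "p \<in> bbox p q" "q \<in> bbox p q"
  by (auto simp: mem_bbox)

lemma bbox_in_axis_rects: "bbox p q \<in> axis_rects"
  unfolding axis_rects_def bbox_def by blast

lemma bbox_subset_axis_rect:
  assumes "R \<in> axis_rects" "p \<in> R" "q \<in> R"
  shows "bbox p q \<subseteq> R"
proof
  fix r assume "r \<in> bbox p q"
  with assms show "r \<in> R"
    unfolding axis_rects_def bbox_def
    by (cases p; cases q; cases r) (auto simp: rect_def min_def max_def split: if_splits)
qed

lemma bbox_shrink:
  assumes "r \<in> bbox p q" "r \<noteq> q"
  shows "bbox p r \<subseteq> bbox p q" "q \<notin> bbox p r"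
proof -
  show "bbox p r \<subseteq> bbox p q"
    using assms(1) by (auto simp: mem_bbox)
  have "q = r" if "q \<in> bbox p r"
    using assms(1) that unfolding mem_bbox
    by (cases p; cases q; cases r) (simp add: min_def max_def split: if_splits)
  then show "q \<notin> bbox p r"
    using assms(2) by blast
qed

lemma card_bbox_shrink:
  assumes "finite S" "q \<in> S" "r \<in> bbox p q" "r \<noteq> q"
  shows "card (S \<inter> bbox p r) < card (S \<inter> bbox p q)"
proof (rule psubset_card_mono)
  show "S \<inter> bbox p r \<subset> S \<inter> bbox p q"
    using bbox_shrink[OF assms(3,4)] assms(2) bbox_ends(2)[of q p] by blast
qed (use assms(1) in simp)

definition delaunay_pair :: "(real \<times> real) set \<Rightarrow> real \<times> real \<Rightarrow> real \<times> real \<Rightarrow> bool" where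
  "delaunay_pair S p q \<longleftrightarrow> p \<noteq> q \<and> S \<inter> bbox p q = {p, q}"

lemma delaunay_pair_in_delaunay_edges:
  assumes "delaunay_pair S p q"
  shows "{p, q} \<in> delaunay_edges S axis_rects"
proof -
  have "S \<inter> bbox p q = {p, q}" "card {p, q} = 2"
    using assms unfolding delaunay_pair_def by auto
  then show ?thesis
    unfolding delaunay_edges_def using bbox_in_axis_rects by blast
qed

lemma delaunay_pair_mem: "delaunay_pair S p q \<Longrightarrow> p \<in> S \<and> q \<in> S"
  unfolding delaunay_pair_def by blast

lemma exists_pair_with_empty_bbox:
  assumes "finite S" and "T p q"
    and in_S: "\<And>p q. T p q \<Longrightarrow> p \<in> S \<and> q \<in> S"
    and split: "\<And>p q r. T p q \<Longrightarrow> r \<in> S \<inter> bbox p q \<Longrightarrow> r \<noteq> p \<Longrightarrow> r \<noteq> q \<Longrightarrow> T p r \<or> T r q"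
  shows "\<exists>p q. T p q \<and> S \<inter> bbox p q = {p, q}"
  using \<open>T p q\<close>
proof (induction "card (S \<inter> bbox p q)" arbitrary: p q rule: less_induct)
  case less
  show ?case
  proof (cases "S \<inter> bbox p q = {p, q}")
    case False
    moreover have "{p, q} \<subseteq> S \<inter> bbox p q"
      using in_S[OF less.prems] bbox_ends by blast
    ultimately obtain r where r: "r \<in> S \<inter> bbox p q" "r \<noteq> p" "r \<noteq> q"
      by blast
    have "card (S \<inter> bbox p r) < card (S \<inter> bbox p q)"
      using card_bbox_shrink[OF \<open>finite S\<close>] in_S[OF less.prems] r by blast
    moreover have "card (S \<inter> bbox r q) < card (S \<inter> bbox p q)"
      using card_bbox_shrink[OF \<open>finite S\<close>, where p = q and q = p and r = r] in_S[OF less.prems] r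
      by (metis IntD2 bbox_commute)
    ultimately show ?thesis
      using split[OF less.prems r] less.hyps by blast
  qed (use less.prems in blast)
qed

definition dyadic_level :: "nat \<Rightarrow> nat \<Rightarrow> nat" where
  "dyadic_level i j = (LEAST k. i div 2 ^ k = j div 2 ^ k)"

lemma dyadic_level_div_eq: "i div 2 ^ dyadic_level i j = j div 2 ^ dyadic_level i j"
proof -
  have "i < 2 ^ (i + j)" "j < 2 ^ (i + j)"
    using less_exp[of "i + j"] by linarith+
  then have "i div 2 ^ (i + j) = j div 2 ^ (i + j)"
    by simp
  then show ?thesis
    unfolding dyadic_level_def by (rule LeastI)
qed

lemma dyadic_level_le_iff: "dyadic_level i j \<le> k \<longleftrightarrow> i div 2 ^ k = j div 2 ^ k"
proof
  assume "dyadic_level i j \<le> k"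
  then have "(2::nat) ^ k = 2 ^ dyadic_level i j * 2 ^ (k - dyadic_level i j)"
    by (simp flip: power_add)
  then show "i div 2 ^ k = j div 2 ^ k"
    using dyadic_level_div_eq[of i j] by (simp add: div_mult2_eq)
next
  assume "i div 2 ^ k = j div 2 ^ k"
  then show "dyadic_level i j \<le> k"
    unfolding dyadic_level_def by (rule Least_le)
qed

lemma dyadic_level_commute: "dyadic_level i j = dyadic_level j i"
  unfolding dyadic_level_def by (simp add: eq_commute)

lemma dyadic_level_eq_0_iff: "dyadic_level i j = 0 \<longleftrightarrow> i = j"
  using dyadic_level_le_iff[of i j 0] by simp

lemma dyadic_level_self [simp]: "dyadic_level i i = 0"
  by (simp add: dyadic_level_eq_0_iff)

lemma dyadic_level_ultrametric: "dyadic_level i k \<le> max (dyadic_level i j) (dyadic_level j k)"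
  by (metis dyadic_level_le_iff max.cobounded1 max.cobounded2)

lemma dyadic_level_le_of_between:
  assumes "min i j \<le> k" "k \<le> max i j"
  shows "dyadic_level i k \<le> dyadic_level i j"
proof -
  let ?l = "dyadic_level i j"
  have "min i j div 2 ^ ?l \<le> k div 2 ^ ?l" "k div 2 ^ ?l \<le> max i j div 2 ^ ?l"
    using assms div_le_mono by blast+
  moreover have "min i j div 2 ^ ?l = i div 2 ^ ?l" "max i j div 2 ^ ?l = i div 2 ^ ?l"
    using dyadic_level_div_eq[of i j] by (simp_all add: min_def max_def)
  ultimately show ?thesis
    using dyadic_level_le_iff by (metis order_antisym)
qed

lemma dyadic_level_le_if_less_power: "i < 2 ^ K \<Longrightarrow> j < 2 ^ K \<Longrightarrow> dyadic_level i j \<le> K"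
  by (simp add: dyadic_level_le_iff)

lemma dyadic_level_no_equilateral:
  assumes "dyadic_level i j = L" "dyadic_level j k = L" "dyadic_level i k = L"
  shows "L = 0"
proof (rule ccontr)
  assume "L \<noteq> 0"
  then obtain m where L: "L = Suc m"
    using not0_implies_Suc by blast
  have halve: "x div 2 ^ L = x div 2 ^ m div 2" for x :: nat
    by (simp only: L power_Suc2 div_mult2_eq)
  have split: "a div 2 ^ m \<noteq> b div 2 ^ m \<and> a div 2 ^ m div 2 = b div 2 ^ m div 2"
    if "dyadic_level a b = L" for a b
    using that dyadic_level_le_iff[of a b m] dyadic_level_le_iff[of a b L, unfolded halve]
    by (simp add: L)
  have no_three_with_same_half: False
    if "x div 2 = y div 2" "y div 2 = z div 2" "x \<noteq> y" "y \<noteq> z" "x \<noteq> z" for x y z :: nat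
  proof -
    have "x mod 2 \<noteq> y mod 2" "y mod 2 \<noteq> z mod 2" "x mod 2 \<noteq> z mod 2"
      using that by (metis div_mult_mod_eq)+
    then show False
      by (metis mod2_eq_if)
  qed
  from split[OF assms(1)] split[OF assms(2)] split[OF assms(3)] show False
    by (elim conjE no_three_with_same_half) assumption+
qed

definition rank_by :: "('a \<Rightarrow> 'b::linorder) \<Rightarrow> 'a set \<Rightarrow> 'a \<Rightarrow> nat" where
  "rank_by f S p = card {v \<in> f ` S. v < f p}"

lemma rank_by_mono: "finite S \<Longrightarrow> f p \<le> f q \<Longrightarrow> rank_by f S p \<le> rank_by f S q"
  unfolding rank_by_def by (rule card_mono) auto

lemma rank_by_strict_mono:
  assumes "finite S" "p \<in> S" "f p < f q"
  shows "rank_by f S p < rank_by f S q"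
  unfolding rank_by_def
proof (rule psubset_card_mono)
  have "f p \<in> {v \<in> f ` S. v < f q} - {v \<in> f ` S. v < f p}"
    using assms(2,3) by simp
  then show "{v \<in> f ` S. v < f p} \<subset> {v \<in> f ` S. v < f q}"
    using assms(3) by auto
qed (use assms(1) in simp)

lemma rank_by_eq_iff:
  assumes "finite S" "p \<in> S" "q \<in> S"
  shows "rank_by f S p = rank_by f S q \<longleftrightarrow> f p = f q"
  using rank_by_strict_mono[OF assms(1,2), of f q] rank_by_strict_mono[OF assms(1,3), of f p]
  by (auto simp: rank_by_def) (metis linorder_neqE less_irrefl)

lemma rank_by_less_card:
  assumes "finite S" "p \<in> S"
  shows "rank_by f S p < card S"
proof -
  have "rank_by f S p < card (f ` S)"
    unfolding rank_by_def using assms by (intro psubset_card_mono) auto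
  also have "\<dots> \<le> card S"
    using assms(1) by (rule card_image_le)
  finally show ?thesis .
qed

lemma rank_by_between:
  assumes "finite S" "min (f p) (f q) \<le> f r" "f r \<le> max (f p) (f q)"
  shows "min (rank_by f S p) (rank_by f S q) \<le> rank_by f S r \<and>
         rank_by f S r \<le> max (rank_by f S p) (rank_by f S q)"
proof (cases "f p \<le> f q")
  case True
  then have "rank_by f S p \<le> rank_by f S r" "rank_by f S r \<le> rank_by f S q"
    using assms by (simp_all add: rank_by_mono)
  then show ?thesis
    by linarith
next
  case False
  then have "rank_by f S q \<le> rank_by f S r" "rank_by f S r \<le> rank_by f S p"
    using assms by (simp_all add: rank_by_mono)
  then show ?thesis
    by linarith
qed

definition bbox_monotone :: "(real \<times> real \<Rightarrow> nat) \<Rightarrow> bool" where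
  "bbox_monotone h \<longleftrightarrow>
     (\<forall>p q r. r \<in> bbox p q \<longrightarrow> min (h p) (h q) \<le> h r \<and> h r \<le> max (h p) (h q))"

lemma bbox_monotone_rank_by_fst: "finite S \<Longrightarrow> bbox_monotone (rank_by fst S)"
  unfolding bbox_monotone_def mem_bbox by (intro allI impI rank_by_between) auto

lemma bbox_monotone_rank_by_snd: "finite S \<Longrightarrow> bbox_monotone (rank_by snd S)"
  unfolding bbox_monotone_def mem_bbox by (intro allI impI rank_by_between) auto

lemma delaunay_pair_at_top_level:
  fixes h :: "real \<times> real \<Rightarrow> nat"
  assumes "finite S" "R \<in> axis_rects"
    and top: "\<And>p q. p \<in> S \<inter> R \<Longrightarrow> q \<in> S \<inter> R \<Longrightarrow> dyadic_level (h p) (h q) \<le> L"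
    and "p0 \<in> S \<inter> R" "q0 \<in> S \<inter> R" "dyadic_level (h p0) (h q0) = L" "0 < L"
  obtains p q where "p \<in> R" "q \<in> R" "delaunay_pair S p q" "dyadic_level (h p) (h q) = L"
proof -
  let ?T = "\<lambda>p q. p \<in> S \<inter> R \<and> q \<in> S \<inter> R \<and> dyadic_level (h p) (h q) = L"
  have "\<exists>p q. ?T p q \<and> S \<inter> bbox p q = {p, q}"
  proof (rule exists_pair_with_empty_bbox[OF \<open>finite S\<close>])
    show "?T p0 q0"
      using assms by blast
  next
    fix p q r
    assume pq: "?T p q" and r: "r \<in> S \<inter> bbox p q"
    then have "r \<in> S \<inter> R"
      using bbox_subset_axis_rect[OF \<open>R \<in> axis_rects\<close>] by blast
    then have "dyadic_level (h p) (h r) \<le> L" "dyadic_level (h r) (h q) \<le> L"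
      using pq top by blast+
    moreover have "L \<le> max (dyadic_level (h p) (h r)) (dyadic_level (h r) (h q))"
      using pq dyadic_level_ultrametric by blast
    ultimately show "?T p r \<or> ?T r q"
      using pq \<open>r \<in> S \<inter> R\<close> by (auto simp: max_def split: if_splits)
  qed blast
  then obtain p q where "?T p q" "S \<inter> bbox p q = {p, q}"
    by blast
  moreover have "p \<noteq> q"
    using \<open>?T p q\<close> \<open>0 < L\<close> by auto
  ultimately show thesis
    using that unfolding delaunay_pair_def by blast
qed

lemma delaunay_pair_below_level:
  fixes h :: "real \<times> real \<Rightarrow> nat"
  assumes "finite S" "R \<in> axis_rects"
    and "bbox_monotone h"
    and "p0 \<in> S \<inter> R" "q0 \<in> S \<inter> R" "p0 \<noteq> q0" "dyadic_level (h p0) (h q0) < L"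
  obtains p q where "p \<in> R" "q \<in> R" "delaunay_pair S p q" "dyadic_level (h p) (h q) < L"
proof -
  let ?T = "\<lambda>p q. p \<in> S \<inter> R \<and> q \<in> S \<inter> R \<and> p \<noteq> q \<and> dyadic_level (h p) (h q) < L"
  have "\<exists>p q. ?T p q \<and> S \<inter> bbox p q = {p, q}"
  proof (rule exists_pair_with_empty_bbox[OF \<open>finite S\<close>])
    show "?T p0 q0"
      using assms by blast
  next
    fix p q r
    assume pq: "?T p q" and r: "r \<in> S \<inter> bbox p q" "r \<noteq> p"
    then have "r \<in> S \<inter> R"
      using bbox_subset_axis_rect[OF \<open>R \<in> axis_rects\<close>] by blast
    moreover have "dyadic_level (h p) (h r) \<le> dyadic_level (h p) (h q)"
      using \<open>bbox_monotone h\<close> r(1) unfolding bbox_monotone_def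
      by (blast intro: dyadic_level_le_of_between)
    ultimately show "?T p r \<or> ?T r q"
      using pq r by auto
  qed blast
  then show thesis
    using that unfolding delaunay_pair_def by blast
qed

lemma delaunay_pairs_at_two_levels:
  fixes h :: "real \<times> real \<Rightarrow> nat"
  assumes "finite S" "R \<in> axis_rects" "3 \<le> card (S \<inter> R)"
    and "bbox_monotone h"
    and "p0 \<in> S \<inter> R" "q0 \<in> S \<inter> R" "h p0 \<noteq> h q0"
  obtains p1 q1 p2 q2 where "{p1, q1, p2, q2} \<subseteq> R"
    "delaunay_pair S p1 q1" "delaunay_pair S p2 q2"
    "dyadic_level (h p2) (h q2) < dyadic_level (h p1) (h q1)"
proof -
  define P where "P = S \<inter> R"
  define L where "L = Max ((\<lambda>(p, q). dyadic_level (h p) (h q)) ` (P \<times> P))"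
  have fin: "finite ((\<lambda>(p, q). dyadic_level (h p) (h q)) ` (P \<times> P))"
    using \<open>finite S\<close> by (simp add: P_def)
  have top: "dyadic_level (h p) (h q) \<le> L" if "p \<in> P" "q \<in> P" for p q
    unfolding L_def using fin that by (intro Max_ge) auto
  have "L \<in> (\<lambda>(p, q). dyadic_level (h p) (h q)) ` (P \<times> P)"
    unfolding L_def using fin assms(5) P_def by (intro Max_in) auto
  then obtain p3 q3 where pq3: "p3 \<in> P" "q3 \<in> P" "dyadic_level (h p3) (h q3) = L"
    by auto
  have "0 < dyadic_level (h p0) (h q0)"
    using \<open>h p0 \<noteq> h q0\<close> dyadic_level_eq_0_iff by blast
  moreover have "dyadic_level (h p0) (h q0) \<le> L"
    using top assms(5,6) by (simp add: P_def)
  ultimately have "0 < L"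
    by linarith
  obtain p1 q1 where pq1: "p1 \<in> R" "q1 \<in> R" "delaunay_pair S p1 q1" "dyadic_level (h p1) (h q1) = L"
    using delaunay_pair_at_top_level[OF assms(1,2) top[unfolded P_def] pq3[unfolded P_def] \<open>0 < L\<close>] .
  obtain X where "X \<subseteq> P" "card X = 3"
    using \<open>3 \<le> card (S \<inter> R)\<close> unfolding P_def by (rule obtain_subset_with_card_n)
  then obtain x y z where xyz: "x \<in> P" "y \<in> P" "z \<in> P" "x \<noteq> y" "y \<noteq> z" "x \<noteq> z"
    unfolding card_3_iff by blast
  have "\<exists>u \<in> P. \<exists>v \<in> P. u \<noteq> v \<and> dyadic_level (h u) (h v) < L"
  proof (rule ccontr)
    assume none_below: "\<not> ?thesis"
    have at_top: "dyadic_level (h u) (h v) = L" if "u \<in> P" "v \<in> P" "u \<noteq> v" for u v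
      using none_below top[OF that(1,2)] that by force
    show False
      using dyadic_level_no_equilateral[OF at_top at_top at_top] xyz \<open>0 < L\<close> by blast
  qed
  then obtain u v where "u \<in> S \<inter> R" "v \<in> S \<inter> R" "u \<noteq> v" "dyadic_level (h u) (h v) < L"
    unfolding P_def by blast
  then obtain p2 q2 where pq2: "p2 \<in> R" "q2 \<in> R" "delaunay_pair S p2 q2" "dyadic_level (h p2) (h q2) < L"
    using delaunay_pair_below_level[OF assms(1,2,4)] by blast
  show thesis
    using that pq1 pq2 by simp
qed

definition pair_colour :: "(real \<times> real) set \<Rightarrow> real \<times> real \<Rightarrow> real \<times> real \<Rightarrow> nat" where
  "pair_colour S p q =
     (if fst p \<noteq> fst q then 2 * dyadic_level (rank_by fst S p) (rank_by fst S q)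
      else 2 * dyadic_level (rank_by snd S p) (rank_by snd S q) + 1)"

definition edge_colour :: "(real \<times> real) set \<Rightarrow> (real \<times> real) set \<Rightarrow> nat" where
  "edge_colour S e = (SOME c. \<exists>p q. e = {p, q} \<and> c = pair_colour S p q)"

lemma pair_colour_commute: "pair_colour S p q = pair_colour S q p"
  unfolding pair_colour_def by (metis dyadic_level_commute)

lemma edge_colour_doubleton: "edge_colour S {p, q} = pair_colour S p q"
proof -
  have "\<exists>c. \<exists>p' q'. {p, q} = {p', q'} \<and> c = pair_colour S p' q'"
    by blast
  from someI_ex[OF this]
  have "\<exists>p' q'. {p, q} = {p', q'} \<and> edge_colour S {p, q} = pair_colour S p' q'"
    unfolding edge_colour_def .
  then show ?thesis
    by (auto simp: doubleton_eq_iff pair_colour_commute)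
qed

lemma pair_colour_le:
  assumes "finite S" "p \<in> S" "q \<in> S" "card S \<le> 2 ^ K"
  shows "pair_colour S p q \<le> 2 * K + 1"
proof -
  have level_le: "dyadic_level (rank_by f S p) (rank_by f S q) \<le> K" for f :: "real \<times> real \<Rightarrow> real"
    using rank_by_less_card[OF assms(1,2), of f] rank_by_less_card[OF assms(1,3), of f] assms(4)
    by (intro dyadic_level_le_if_less_power) linarith+
  show ?thesis
    using level_le[of fst] level_le[of snd] unfolding pair_colour_def by simp
qed

lemma card_edge_colours_le:
  assumes "finite S" "card S \<le> 2 ^ K"
  shows "card (edge_colour S ` delaunay_edges S axis_rects) \<le> 2 * K + 2"
proof -
  have "edge_colour S ` delaunay_edges S axis_rects \<subseteq> {..2 * K + 1}"
  proof
    fix c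
    assume "c \<in> edge_colour S ` delaunay_edges S axis_rects"
    then obtain p q where "c = edge_colour S {p, q}" "p \<in> S" "q \<in> S"
      unfolding delaunay_edges_def by (auto simp: card_2_iff)
    then show "c \<in> {..2 * K + 1}"
      using pair_colour_le[OF assms(1) _ _ assms(2)] by (simp add: edge_colour_doubleton)
  qed
  then show ?thesis
    using card_mono[of "{..2 * K + 1}"] by fastforce
qed

lemma delaunay_pairs_of_two_colours_nonvertical:
  assumes "finite S" "R \<in> axis_rects" "3 \<le> card (S \<inter> R)"
    and "p0 \<in> S \<inter> R" "q0 \<in> S \<inter> R" "fst p0 \<noteq> fst q0"
  obtains p1 q1 p2 q2 where "{p1, q1, p2, q2} \<subseteq> R"
    "delaunay_pair S p1 q1" "delaunay_pair S p2 q2" "pair_colour S p1 q1 \<noteq> pair_colour S p2 q2"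
proof -
  have "rank_by fst S p0 \<noteq> rank_by fst S q0"
    using assms(4-6) rank_by_eq_iff[OF assms(1)] by blast
  then obtain p1 q1 p2 q2 where pq: "{p1, q1, p2, q2} \<subseteq> R" "delaunay_pair S p1 q1" "delaunay_pair S p2 q2"
    and less: "dyadic_level (rank_by fst S p2) (rank_by fst S q2) < dyadic_level (rank_by fst S p1) (rank_by fst S q1)"
    using delaunay_pairs_at_two_levels[OF assms(1-3) bbox_monotone_rank_by_fst[OF assms(1)] assms(4,5)]
    by blast
  have "fst p1 \<noteq> fst q1"
  proof
    assume "fst p1 = fst q1"
    then have "rank_by fst S p1 = rank_by fst S q1"
      by (simp add: rank_by_def)
    with less show False
      by simp
  qed
  then have colour1: "pair_colour S p1 q1 = 2 * dyadic_level (rank_by fst S p1) (rank_by fst S q1)"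
    by (simp add: pair_colour_def)
  have "pair_colour S p1 q1 \<noteq> pair_colour S p2 q2"
  proof (cases "fst p2 = fst q2")
    case True
    then have "odd (pair_colour S p2 q2)"
      by (simp add: pair_colour_def)
    moreover have "even (pair_colour S p1 q1)"
      using colour1 by simp
    ultimately show ?thesis
      by auto
  next
    case False
    then have "pair_colour S p2 q2 = 2 * dyadic_level (rank_by fst S p2) (rank_by fst S q2)"
      by (simp add: pair_colour_def)
    with colour1 less show ?thesis
      by simp
  qed
  with pq that show thesis
    by blast
qed

lemma delaunay_pairs_of_two_colours_vertical:
  assumes "finite S" "R \<in> axis_rects" "3 \<le> card (S \<inter> R)"
    and vertical: "\<And>p q. p \<in> S \<inter> R \<Longrightarrow> q \<in> S \<inter> R \<Longrightarrow> fst p = fst q"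
  obtains p1 q1 p2 q2 where "{p1, q1, p2, q2} \<subseteq> R"
    "delaunay_pair S p1 q1" "delaunay_pair S p2 q2" "pair_colour S p1 q1 \<noteq> pair_colour S p2 q2"
proof -
  have "2 \<le> card (S \<inter> R)"
    using assms(3) by linarith
  then obtain X where "X \<subseteq> S \<inter> R" "card X = 2"
    by (rule obtain_subset_with_card_n)
  then obtain x y where xy: "x \<in> S \<inter> R" "y \<in> S \<inter> R" "x \<noteq> y"
    unfolding card_2_iff by blast
  then have "snd x \<noteq> snd y"
    using vertical[OF xy(1,2)] by (auto simp: prod_eq_iff)
  then have "rank_by snd S x \<noteq> rank_by snd S y"
    using rank_by_eq_iff[OF assms(1)] xy by blast
  then obtain p1 q1 p2 q2 where pq: "{p1, q1, p2, q2} \<subseteq> R" "delaunay_pair S p1 q1" "delaunay_pair S p2 q2"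
    and less: "dyadic_level (rank_by snd S p2) (rank_by snd S q2) < dyadic_level (rank_by snd S p1) (rank_by snd S q1)"
    using delaunay_pairs_at_two_levels[OF assms(1-3) bbox_monotone_rank_by_snd[OF assms(1)] xy(1,2)]
    by blast
  have "{p1, q1, p2, q2} \<subseteq> S \<inter> R"
    using pq delaunay_pair_mem by auto
  then have "fst p1 = fst q1" "fst p2 = fst q2"
    using vertical by auto
  then have "pair_colour S p1 q1 \<noteq> pair_colour S p2 q2"
    using less unfolding pair_colour_def by simp
  with pq that show thesis
    by blast
qed

lemma rect_contains_edges_of_two_colours:
  assumes "finite S" "R \<in> axis_rects" "3 \<le> card (S \<inter> R)"
  shows "\<exists>e1\<in>delaunay_edges S axis_rects. \<exists>e2\<in>delaunay_edges S axis_rects.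
           e1 \<subseteq> R \<and> e2 \<subseteq> R \<and> edge_colour S e1 \<noteq> edge_colour S e2"
proof -
  obtain p1 q1 p2 q2 where pq: "{p1, q1, p2, q2} \<subseteq> R"
      "delaunay_pair S p1 q1" "delaunay_pair S p2 q2" "pair_colour S p1 q1 \<noteq> pair_colour S p2 q2"
  proof (cases "\<exists>p0 \<in> S \<inter> R. \<exists>q0 \<in> S \<inter> R. fst p0 \<noteq> fst q0")
    case True
    then show thesis
      using that delaunay_pairs_of_two_colours_nonvertical[OF assms] by blast
  next
    case False
    then show thesis
      using that delaunay_pairs_of_two_colours_vertical[OF assms] by blast
  qed
  have "{p1, q1} \<in> delaunay_edges S axis_rects" "{p2, q2} \<in> delaunay_edges S axis_rects"
    using pq(2,3) by (simp_all add: delaunay_pair_in_delaunay_edges)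
  moreover have "{p1, q1} \<subseteq> R" "{p2, q2} \<subseteq> R"
    using pq(1) by auto
  moreover have "edge_colour S {p1, q1} \<noteq> edge_colour S {p2, q2}"
    using pq(4) by (simp add: edge_colour_doubleton)
  ultimately show ?thesis
    by blast
qed

lemma exists_power_of_two_bound:
  assumes "2 \<le> n"
  shows "\<exists>K. n \<le> 2 ^ K \<and> 2 * real K + 2 \<le> 6 / ln 2 * ln (real n)"
proof (intro exI conjI)
  define K where "K = nat \<lceil>log 2 (real n)\<rceil>"
  have log_ge_1: "1 \<le> log 2 (real n)"
    using assms by simp
  have K: "log 2 (real n) \<le> real K" "real K < log 2 (real n) + 1"
    unfolding K_def using log_ge_1 by linarith+
  have "real n = 2 powr log 2 (real n)"
    using assms by simp
  also have "\<dots> \<le> 2 powr real K"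
    using K(1) by (rule powr_mono) simp
  finally show "n \<le> 2 ^ K"
    by (simp add: powr_realpow flip: of_nat_le_iff)
  have "2 * real K + 2 \<le> 6 * log 2 (real n)"
    using K(2) log_ge_1 by linarith
  then show "2 * real K + 2 \<le> 6 / ln 2 * ln (real n)"
    by (simp add: log_def)
qed

theorem corollary2:
  shows "\<exists>c::real. \<forall>S :: (real \<times> real) set. finite S \<and> card S \<ge> 2 \<longrightarrow>
     (\<exists>col :: (real \<times> real) set \<Rightarrow> nat.
        real (card (col ` delaunay_edges S axis_rects)) \<le> c * ln (real (card S)) \<and>
        (\<forall>R\<in>axis_rects. card (S \<inter> R) \<ge> 3 \<longrightarrow>
           (\<exists>e1\<in>delaunay_edges S axis_rects. \<exists>e2\<in>delaunay_edges S axis_rects.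
               e1 \<subseteq> R \<and> e2 \<subseteq> R \<and> col e1 \<noteq> col e2)))"
proof (rule exI[of _ "6 / ln 2"], intro allI impI)
  fix S :: "(real \<times> real) set"
  assume "finite S \<and> 2 \<le> card S"
  then have fin: "finite S" and two: "2 \<le> card S"
    by auto
  obtain K where K: "card S \<le> 2 ^ K" "2 * real K + 2 \<le> 6 / ln 2 * ln (real (card S))"
    using exists_power_of_two_bound[OF two] by blast
  have "real (card (edge_colour S ` delaunay_edges S axis_rects)) \<le> real (2 * K + 2)"
    using card_edge_colours_le[OF fin K(1)] by (rule of_nat_mono)
  with K(2) have "real (card (edge_colour S ` delaunay_edges S axis_rects)) \<le> 6 / ln 2 * ln (real (card S))"
    by simp
  moreover have "\<forall>R\<in>axis_rects. 3 \<le> card (S \<inter> R) \<longrightarrow>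
      (\<exists>e1\<in>delaunay_edges S axis_rects. \<exists>e2\<in>delaunay_edges S axis_rects.
         e1 \<subseteq> R \<and> e2 \<subseteq> R \<and> edge_colour S e1 \<noteq> edge_colour S e2)"
    using rect_contains_edges_of_two_colours[OF fin] by blast
  ultimately show "\<exists>col :: (real \<times> real) set \<Rightarrow> nat.
      real (card (col ` delaunay_edges S axis_rects)) \<le> 6 / ln 2 * ln (real (card S)) \<and>
      (\<forall>R\<in>axis_rects. 3 \<le> card (S \<inter> R) \<longrightarrow>
         (\<exists>e1\<in>delaunay_edges S axis_rects. \<exists>e2\<in>delaunay_edges S axis_rects.
            e1 \<subseteq> R \<and> e2 \<subseteq> R \<and> col e1 \<noteq> col e2))"
    by blast
qed

end
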